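(* Let $A$ and $B$ be complex square matrices, not necessarily of the same size, with identical pseudospectra, i.e. $\|(zI-A)^{-1}\|=\|(zI-B)^{-1}\|$ for all $z\in\mathbb{C}$. Then the largest eigenvalue of $\operatorname{Re}A$ equals the largest eigenvalue of $\operatorname{Re}B$, and the smallest eigenvalue of $\operatorname{Re}A$ equals the smallest eigenvalue of $\operatorname{Re}B$.
   Context: $\operatorname{Re}T=(T+T^* )/2$. $\|\cdot\|$ is the spectral norm; by convention $\|(zI-T)^{-1}\|=\infty$ for $z$ an eigenvalue of $T$ (with the identity matrices $I$ of the appropriate sizes). *)

theory Defs
  imports "HOL-Analysis.Analysis"
begin

text \<open>Complex n x n matrices are represented as complex^'n^'n (n = CARD('n)),
  acting on complex^'n with the Euclidean (l2) norm.\<close>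

definition spec_norm :: "complex^'n^'m \<Rightarrow> real" where
  "spec_norm M = onorm (\<lambda>x::complex^'n. M *v x)"

definition conj_transpose :: "complex^'n^'m \<Rightarrow> complex^'m^'n" where
  "conj_transpose M = (\<chi> i j. cnj (M $ j $ i))"

definition herm_part :: "complex^'n^'n \<Rightarrow> complex^'n^'n" where
  "herm_part T = (1/2::real) *\<^sub>R (T + conj_transpose T)"

definition is_eigenvalue :: "complex^'n^'n \<Rightarrow> complex \<Rightarrow> bool" where
  "is_eigenvalue M c \<longleftrightarrow> (\<exists>v. v \<noteq> 0 \<and> M *v v = c *s v)"

definition resolvent_norm :: "complex^'n^'n \<Rightarrow> complex \<Rightarrow> ereal" where
  "resolvent_norm M z =
     (if is_eigenvalue M z then \<infinity>
      else ereal (spec_norm (matrix_inv (mat z - M))))"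

text \<open>Largest / smallest eigenvalue of a (Hermitian) matrix: max / min over its
  real eigenvalues (all eigenvalues of a Hermitian matrix are real).\<close>
definition lambda_max :: "complex^'n^'n \<Rightarrow> real" where
  "lambda_max M = Max {r::real. is_eigenvalue M (complex_of_real r)}"

definition lambda_min :: "complex^'n^'n \<Rightarrow> real" where
  "lambda_min M = Min {r::real. is_eigenvalue M (complex_of_real r)}"

end

theory Submission
  imports Defs
begin

text \<open>View \<open>complex^'n\<close> as a real inner product space, with \<open>inner u v = Re \<langle>u, v\<rangle>\<close>.
  Then \<open>herm_part A\<close> is self-adjoint and has the same quadratic form \<open>inner (A *v v) v\<close> as \<open>A\<close>,
  so \<open>lambda_max (herm_part A)\<close> is the maximum \<open>m\<close> of this form on the unit sphere.
  For real \<open>x > c\<close>, the bound \<open>\<parallel>(x - A)\<^sup>-\<^sup>1\<parallel> \<le> 1 / (x - c)\<close> means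
  \<open>\<parallel>(x - A) v\<parallel> \<ge> (x - c) \<parallel>v\<parallel>\<close> for all \<open>v\<close>. By Cauchy-Schwarz this holds for all \<open>x > c\<close>
  when \<open>m \<le> c\<close>; when \<open>m > c\<close> it fails for large \<open>x\<close> at a maximising unit vector \<open>v\<close>, since
  \<open>\<parallel>(x - A) v\<parallel>\<^sup>2 = x\<^sup>2 - 2 x m + \<parallel>A v\<parallel>\<^sup>2\<close>. So the resolvent norm on the real axis
  determines \<open>lambda_max (herm_part A)\<close>, and symmetrically \<open>lambda_min (herm_part A)\<close>.\<close>

section \<open>Self-adjoint operators on real inner product spaces\<close>

lemma nonpos_if_linear_le_quadratic:
  fixes a b :: real
  assumes "\<And>t. t > 0 \<Longrightarrow> t * a \<le> t\<^sup>2 * b"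
  shows "a \<le> 0"
proof (rule ccontr)
  assume "\<not> a \<le> 0"
  define t where "t = a / (\<bar>b\<bar> + 1)"
  have "t > 0" using \<open>\<not> a \<le> 0\<close> by (simp add: t_def)
  then have "a \<le> t * b" using assms[of t] by (simp add: power2_eq_square)
  also have "\<dots> \<le> t * \<bar>b\<bar>" using \<open>t > 0\<close> by (simp add: mult_left_mono)
  also have "\<dots> < a" using \<open>\<not> a \<le> 0\<close> by (simp add: t_def field_simps)
  finally show False by simp
qed

lemma self_adjoint_nonneg_quadratic_form_eq_0D:
  fixes P :: "'a::real_inner \<Rightarrow> 'a"
  assumes "linear P" and self_adjoint: "\<And>u v. inner (P u) v = inner u (P v)"
    and nonneg: "\<And>u. inner (P u) u \<ge> 0" and "inner (P v) v = 0"
  shows "P v = 0"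
proof -
  define w where "w = P v"
  have "t * (2 * inner w w) \<le> t\<^sup>2 * inner (P w) w" for t
  proof -
    have "inner (P w) v = inner w w"
      by (simp add: self_adjoint w_def inner_commute)
    then have "inner (P (v - t *\<^sub>R w)) (v - t *\<^sub>R w) = t\<^sup>2 * inner (P w) w - t * (2 * inner w w)"
      using \<open>linear P\<close> \<open>inner (P v) v = 0\<close>
      by (simp add: linear_diff linear_scale inner_diff_left inner_diff_right w_def
          power2_eq_square algebra_simps inner_commute)
    then show ?thesis using nonneg[of "v - t *\<^sub>R w"] by simp
  qed
  then have "2 * inner w w \<le> 0" by (intro nonpos_if_linear_le_quadratic)
  then have "inner w w = 0" using inner_ge_zero[of w] by linarith
  then show ?thesis by (simp add: w_def)
qed

lemma self_adjoint_maximiser_eigenvector: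
  fixes L :: "'a::real_inner \<Rightarrow> 'a"
  assumes "linear L" and self_adjoint: "\<And>u v. inner (L u) v = inner u (L v)"
    and le_max: "\<And>u. inner (L u) u \<le> m * (norm u)\<^sup>2" and "inner (L v) v = m * (norm v)\<^sup>2"
  shows "L v = m *\<^sub>R v"
proof -
  define P where "P u = m *\<^sub>R u - L u" for u
  have "linear P"
    unfolding P_def by (intro linear_compose_sub linear_scale_self \<open>linear L\<close>)
  moreover have "inner (P u) w = inner u (P w)" for u w
    using self_adjoint[of u w] by (simp add: P_def inner_diff_left inner_diff_right)
  moreover have "inner (P u) u \<ge> 0" for u
    using le_max[of u] by (simp add: P_def inner_diff_left power2_norm_eq_inner)
  moreover have "inner (P v) v = 0"
    using \<open>inner (L v) v = m * (norm v)\<^sup>2\<close> by (simp add: P_def inner_diff_left power2_norm_eq_inner)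
  ultimately have "P v = 0" by (rule self_adjoint_nonneg_quadratic_form_eq_0D)
  then show ?thesis by (simp add: P_def)
qed

definition real_eigenvalues :: "('a::real_vector \<Rightarrow> 'a) \<Rightarrow> real set" where
  "real_eigenvalues L = {r. \<exists>v. v \<noteq> 0 \<and> L v = r *\<^sub>R v}"

lemma real_eigenvalues_uminus: "real_eigenvalues (\<lambda>u. - L u) = uminus ` real_eigenvalues L"
proof -
  have "r \<in> real_eigenvalues (\<lambda>u. - L u) \<longleftrightarrow> - r \<in> real_eigenvalues L" for r
    by (auto simp: real_eigenvalues_def minus_equation_iff[of "L _"])
  then show ?thesis by (force simp: image_iff)
qed

lemma finite_real_eigenvalues_self_adjoint:
  fixes L :: "'a::euclidean_space \<Rightarrow> 'a"
  assumes self_adjoint: "\<And>u v. inner (L u) v = inner u (L v)"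
  shows "finite (real_eigenvalues L)"
proof -
  define E where "E = real_eigenvalues L"
  define vec where "vec r = (SOME v. v \<noteq> 0 \<and> L v = r *\<^sub>R v)" for r
  have vec: "vec r \<noteq> 0 \<and> L (vec r) = r *\<^sub>R vec r" if "r \<in> E" for r
  proof -
    have "\<exists>v. v \<noteq> 0 \<and> L v = r *\<^sub>R v" using that by (simp add: E_def real_eigenvalues_def)
    then show ?thesis unfolding vec_def by (rule someI_ex)
  qed
  have "inj_on vec E"
  proof (rule inj_onI)
    fix r s assume "r \<in> E" "s \<in> E" "vec r = vec s"
    then have "r *\<^sub>R vec r = s *\<^sub>R vec r" using vec by metis
    then show "r = s" using vec \<open>r \<in> E\<close> by simp
  qed
  have "pairwise orthogonal (vec ` E)"
  proof (clarsimp simp: pairwise_def orthogonal_def)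
    fix r s assume "r \<in> E" "s \<in> E" "vec r \<noteq> vec s"
    have "r * inner (vec r) (vec s) = s * inner (vec r) (vec s)"
      using self_adjoint[of "vec r" "vec s"] vec \<open>r \<in> E\<close> \<open>s \<in> E\<close> by simp
    with \<open>vec r \<noteq> vec s\<close> show "inner (vec r) (vec s) = 0" by auto
  qed
  moreover have "0 \<notin> vec ` E" using vec by auto
  ultimately have "finite (vec ` E)"
    using pairwise_orthogonal_independent independent_bound by blast
  then show ?thesis using \<open>inj_on vec E\<close> finite_image_iff E_def by blast
qed

lemma quadratic_form_attains_max:
  fixes L :: "'a::euclidean_space \<Rightarrow> 'a"
  assumes "linear L"
  obtains v where "norm v = 1" "\<And>u. inner (L u) u \<le> inner (L v) v * (norm u)\<^sup>2"
proof -
  have "continuous_on (sphere 0 1) (\<lambda>u. inner (L u) u)"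
    using \<open>linear L\<close> by (intro continuous_intros linear_continuous_on) (simp add: linear_conv_bounded_linear)
  moreover have "sphere (0::'a) 1 \<noteq> {}" by simp
  ultimately obtain v where v: "v \<in> sphere 0 1"
    and max: "\<And>u. u \<in> sphere 0 1 \<Longrightarrow> inner (L u) u \<le> inner (L v) v"
    using continuous_attains_sup[OF compact_sphere] by blast
  have "inner (L u) u \<le> inner (L v) v * (norm u)\<^sup>2" for u
  proof (cases "u = 0")
    case True
    then show ?thesis using \<open>linear L\<close> by (simp add: linear_0)
  next
    case False
    have "inner (L u) u / (norm u)\<^sup>2 = inner (L (u /\<^sub>R norm u)) (u /\<^sub>R norm u)"
      using \<open>linear L\<close> by (simp add: linear_scale power2_eq_square field_simps)
    also have "\<dots> \<le> inner (L v) v" using False by (intro max) simp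
    finally show ?thesis using False by (simp add: divide_le_eq)
  qed
  with v that show ?thesis by simp
qed

lemma self_adjoint_Max_eigenvalue:
  fixes L :: "'a::euclidean_space \<Rightarrow> 'a"
  assumes "linear L" and self_adjoint: "\<And>u v. inner (L u) v = inner u (L v)"
  obtains v where "norm v = 1" "L v = Max (real_eigenvalues L) *\<^sub>R v"
    "\<And>u. inner (L u) u \<le> Max (real_eigenvalues L) * (norm u)\<^sup>2"
proof -
  obtain v where "norm v = 1" and le_max: "\<And>u. inner (L u) u \<le> inner (L v) v * (norm u)\<^sup>2"
    using quadratic_form_attains_max[OF \<open>linear L\<close>] by blast
  define m where "m = inner (L v) v"
  note le_max = le_max[folded m_def]
  have Lv: "L v = m *\<^sub>R v"
    using \<open>linear L\<close> self_adjoint le_max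
    by (rule self_adjoint_maximiser_eigenvector) (simp add: m_def \<open>norm v = 1\<close>)
  have "finite (real_eigenvalues L)" using self_adjoint by (rule finite_real_eigenvalues_self_adjoint)
  moreover have "r \<le> m" if r: "r \<in> real_eigenvalues L" for r
  proof -
    obtain u where "u \<noteq> 0" "L u = r *\<^sub>R u" using r by (auto simp: real_eigenvalues_def)
    then have "r * (norm u)\<^sup>2 \<le> m * (norm u)\<^sup>2"
      using le_max[of u] by (simp add: power2_norm_eq_inner)
    then show ?thesis using \<open>u \<noteq> 0\<close> by simp
  qed
  moreover have "m \<in> real_eigenvalues L"
    using Lv \<open>norm v = 1\<close> by (auto simp: real_eigenvalues_def intro!: exI[of _ v])
  ultimately have "Max (real_eigenvalues L) = m"
    by (rule Max_eqI)
  then show ?thesis using \<open>norm v = 1\<close> Lv le_max by (intro that) simp_all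
qed

lemma self_adjoint_Min_eigenvalue:
  fixes L :: "'a::euclidean_space \<Rightarrow> 'a"
  assumes "linear L" and self_adjoint: "\<And>u v. inner (L u) v = inner u (L v)"
  obtains v where "norm v = 1" "L v = Min (real_eigenvalues L) *\<^sub>R v"
    "\<And>u. Min (real_eigenvalues L) * (norm u)\<^sup>2 \<le> inner (L u) u"
proof -
  define E where "E = real_eigenvalues L"
  have "linear (\<lambda>u. - L u)" using \<open>linear L\<close> by (rule linear_compose_neg)
  moreover have "inner (- L u) w = inner u (- L w)" for u w by (simp add: self_adjoint)
  ultimately obtain v where "norm v = 1" and Lv: "- L v = Max (uminus ` E) *\<^sub>R v"
    and le_max: "\<And>u. inner (- L u) u \<le> Max (uminus ` E) * (norm u)\<^sup>2"
    using self_adjoint_Max_eigenvalue[of "\<lambda>u. - L u"] unfolding real_eigenvalues_uminus E_def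
    by blast
  have Lv': "L v = (- Max (uminus ` E)) *\<^sub>R v" using arg_cong[OF Lv, of uminus] by simp
  then have "- Max (uminus ` E) \<in> E"
    using \<open>norm v = 1\<close> by (auto simp: E_def real_eigenvalues_def intro!: exI[of _ v])
  then have "E \<noteq> {}" by blast
  then have Max_eq: "Max (uminus ` E) = - Min E"
    using finite_real_eigenvalues_self_adjoint[OF self_adjoint] by (simp add: E_def)
  then have "L v = Min E *\<^sub>R v" using Lv' by simp
  moreover have "Min E * (norm u)\<^sup>2 \<le> inner (L u) u" for u using le_max[of u] Max_eq by simp
  ultimately show ?thesis using \<open>norm v = 1\<close> unfolding E_def by (intro that)
qed

section \<open>Lower bounds for shifted operators\<close>

lemma lower_bound_right_iff_quadratic_form_le:
  fixes f :: "'a::real_inner \<Rightarrow> 'a"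
  assumes le_max: "\<And>u. inner (f u) u \<le> m * (norm u)\<^sup>2"
    and "norm v = 1" "inner (f v) v = m"
  shows "(\<forall>x>c. \<forall>u. (x - c) * norm u \<le> norm (x *\<^sub>R u - f u)) \<longleftrightarrow> m \<le> c"
proof
  assume bound: "\<forall>x>c. \<forall>u. (x - c) * norm u \<le> norm (x *\<^sub>R u - f u)"
  show "m \<le> c"
  proof (rule ccontr)
    assume "\<not> m \<le> c"
    define K where "K = (norm (f v))\<^sup>2"
    \<comment> \<open>large enough that \<open>2 x (m - c) > K - c\<^sup>2\<close>, i.e. \<open>\<parallel>x v - f v\<parallel>\<^sup>2 < (x - c)\<^sup>2\<close>\<close>
    define x where "x = max (c + 1) ((K + 1) / (2 * (m - c)))"
    have "x > c" by (simp add: x_def)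
    have "(K + 1) / (2 * (m - c)) \<le> x" by (simp add: x_def)
    then have "K + 1 \<le> x * (2 * (m - c))"
      using \<open>\<not> m \<le> c\<close> by (simp add: divide_le_eq)
    have "(norm (x *\<^sub>R v - f v))\<^sup>2 = x * x * inner v v - 2 * x * inner (f v) v + inner (f v) (f v)"
      unfolding power2_norm_eq_inner
      by (simp add: inner_diff_left inner_diff_right inner_commute[of v "f v"] algebra_simps)
    also have "\<dots> = x\<^sup>2 - 2 * x * m + K"
      using \<open>norm v = 1\<close> \<open>inner (f v) v = m\<close>
      by (simp add: K_def power2_eq_square flip: power2_norm_eq_inner)
    also have "\<dots> < (x - c)\<^sup>2"
      using \<open>K + 1 \<le> x * (2 * (m - c))\<close>
      by (simp add: power2_eq_square algebra_simps) (use zero_le_square[of c] in linarith)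
    finally have "norm (x *\<^sub>R v - f v) < x - c"
      using \<open>x > c\<close> by (simp add: power2_less_imp_less)
    moreover have "(x - c) * norm v \<le> norm (x *\<^sub>R v - f v)" using bound \<open>x > c\<close> by blast
    ultimately show False using \<open>norm v = 1\<close> by simp
  qed
next
  assume "m \<le> c"
  show "\<forall>x>c. \<forall>u. (x - c) * norm u \<le> norm (x *\<^sub>R u - f u)"
  proof (intro allI impI)
    fix x u assume "x > c"
    have "(x - c) * (norm u)\<^sup>2 \<le> x * (norm u)\<^sup>2 - inner (f u) u"
      using le_max[of u] mult_right_mono[OF \<open>m \<le> c\<close>, of "(norm u)\<^sup>2"] by (simp add: algebra_simps)
    also have "\<dots> = inner (x *\<^sub>R u - f u) u"
      by (simp add: inner_diff_left power2_norm_eq_inner)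
    also have "\<dots> \<le> norm (x *\<^sub>R u - f u) * norm u"
      by (rule norm_cauchy_schwarz)
    finally show "(x - c) * norm u \<le> norm (x *\<^sub>R u - f u)"
      by (cases "u = 0") (simp_all add: power2_eq_square)
  qed
qed

lemma all_greater_uminus_iff: "(\<forall>x>- c. P (- x)) \<longleftrightarrow> (\<forall>x<c. P (x::real))"
  by (metis minus_less_iff minus_minus)

lemma lower_bound_left_iff_quadratic_form_ge:
  fixes f :: "'a::real_inner \<Rightarrow> 'a"
  assumes ge_min: "\<And>u. m * (norm u)\<^sup>2 \<le> inner (f u) u"
    and "norm v = 1" "inner (f v) v = m"
  shows "(\<forall>x<c. \<forall>u. (c - x) * norm u \<le> norm (x *\<^sub>R u - f u)) \<longleftrightarrow> c \<le> m"
proof -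
  have "inner (- f u) u \<le> - m * (norm u)\<^sup>2" for u
    using ge_min[of u] by simp
  moreover have "inner (- f v) v = - m"
    using \<open>inner (f v) v = m\<close> by simp
  ultimately have "(\<forall>x>- c. \<forall>u. (x - - c) * norm u \<le> norm (x *\<^sub>R u - - f u)) \<longleftrightarrow> - m \<le> - c"
    using \<open>norm v = 1\<close> by (intro lower_bound_right_iff_quadratic_form_le)
  moreover have "norm (x *\<^sub>R u - - f u) = norm ((- x) *\<^sub>R u - f u)" for x u
    using norm_minus_cancel[of "(- x) *\<^sub>R u - f u"] by (simp add: add.commute)
  ultimately have "c \<le> m \<longleftrightarrow> (\<forall>x>- c. \<forall>u. (c - - x) * norm u \<le> norm ((- x) *\<^sub>R u - f u))"
    by (simp add: add.commute)
  also have "\<dots> \<longleftrightarrow> (\<forall>x<c. \<forall>u. (c - x) * norm u \<le> norm (x *\<^sub>R u - f u))"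
    by (rule all_greater_uminus_iff[where P = "\<lambda>x. \<forall>u. (c - x) * norm u \<le> norm (x *\<^sub>R u - f u)"])
  finally show ?thesis by blast
qed

lemma onorm_inverse_le_iff:
  fixes f :: "'a::real_normed_vector \<Rightarrow> 'b::real_normed_vector"
  assumes "bounded_linear g" "\<And>x. g (f x) = x" "\<And>y. f (g y) = y" "\<delta> > 0"
  shows "onorm g \<le> 1 / \<delta> \<longleftrightarrow> (\<forall>x. \<delta> * norm x \<le> norm (f x))"
proof
  assume "onorm g \<le> 1 / \<delta>"
  show "\<forall>x. \<delta> * norm x \<le> norm (f x)"
  proof
    fix x
    have "norm x \<le> onorm g * norm (f x)"
      using onorm[OF \<open>bounded_linear g\<close>, of "f x"] by (simp add: assms(2))
    also have "\<dots> \<le> 1 / \<delta> * norm (f x)"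
      using \<open>onorm g \<le> 1 / \<delta>\<close> norm_ge_zero by (rule mult_right_mono)
    finally show "\<delta> * norm x \<le> norm (f x)"
      using \<open>\<delta> > 0\<close> by (simp add: field_simps)
  qed
next
  assume bound: "\<forall>x. \<delta> * norm x \<le> norm (f x)"
  have g_bound: "norm (g y) \<le> 1 / \<delta> * norm y" for y
    using bound[rule_format, of "g y"] \<open>\<delta> > 0\<close> by (simp add: assms(3) field_simps)
  show "onorm g \<le> 1 / \<delta>"
    using \<open>\<delta> > 0\<close> by (intro onorm_bound[OF _ g_bound]) simp
qed

section \<open>Complex matrices as real operators\<close>

lemma of_real_scalar_mult: "(of_real r :: 'a::real_algebra_1) *s v = r *\<^sub>R v"
  by (simp add: vec_eq_iff flip: scaleR_conv_of_real)

lemma mat_matrix_vector_mult: "mat z *v v = z *s (v :: 'a::semiring_1^'n)"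
  by (simp add: vec_eq_iff matrix_vector_mult_def mat_def if_distrib[of "\<lambda>x. x * _"] sum.delta'
      cong: if_cong)

lemma inner_complex_eq_Re_mult_cnj: "inner x y = Re (x * cnj y)"
  by (simp add: inner_complex_def)

lemma inner_conj_transpose_mult_left:
  "inner (conj_transpose A *v u) v = inner u (A *v v)"
proof -
  have "inner (conj_transpose A *v u) v = Re (\<Sum>i\<in>UNIV. \<Sum>j\<in>UNIV. cnj (A$j$i) * u$j * cnj (v$i))"
    by (simp add: inner_vec_def inner_complex_eq_Re_mult_cnj conj_transpose_def
        matrix_vector_mult_def sum_distrib_right Re_sum)
  also have "\<dots> = Re (\<Sum>j\<in>UNIV. \<Sum>i\<in>UNIV. u$j * cnj (A$j$i * v$i))"
    by (subst sum.swap) (simp add: algebra_simps)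
  also have "\<dots> = inner u (A *v v)"
    by (simp add: inner_vec_def inner_complex_eq_Re_mult_cnj matrix_vector_mult_def
        sum_distrib_left Re_sum)
  finally show ?thesis .
qed

lemma inner_conj_transpose_mult_right:
  "inner u (conj_transpose A *v v) = inner (A *v u) v"
  by (metis inner_conj_transpose_mult_left inner_commute)

lemma herm_part_mult_vector:
  "herm_part A *v v = (1/2::real) *\<^sub>R (A *v v + conj_transpose A *v v)"
  by (simp add: herm_part_def vec_eq_iff matrix_vector_mult_def scaleR_sum_right sum.distrib
      vector_scaleR_component algebra_simps scaleR_conv_of_real[where 'a = complex] sum_distrib_left)

lemma herm_part_self_adjoint: "inner (herm_part A *v u) v = inner u (herm_part A *v v)"
  by (simp add: herm_part_mult_vector inner_add_left inner_add_right inner_conj_transpose_mult_left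
      inner_conj_transpose_mult_right)

lemma inner_herm_part_mult_vector: "inner (herm_part A *v v) v = inner (A *v v) v"
  by (simp add: herm_part_mult_vector inner_add_left inner_conj_transpose_mult_left)
    (simp add: inner_commute[of v])

lemma lambda_max_eq_Max: "lambda_max M = Max (real_eigenvalues ((*v) M))"
  by (simp add: lambda_max_def real_eigenvalues_def is_eigenvalue_def of_real_scalar_mult)

lemma lambda_min_eq_Min: "lambda_min M = Min (real_eigenvalues ((*v) M))"
  by (simp add: lambda_min_def real_eigenvalues_def is_eigenvalue_def of_real_scalar_mult)

lemma lambda_max_herm_part:
  fixes A :: "complex^'n^'n"
  obtains v where "norm v = 1" "inner (A *v v) v = lambda_max (herm_part A)"
    "\<And>u. inner (A *v u) u \<le> lambda_max (herm_part A) * (norm u)\<^sup>2"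
proof -
  obtain v where "norm v = 1" and Hv: "herm_part A *v v = lambda_max (herm_part A) *\<^sub>R v"
    and "\<And>u. inner (herm_part A *v u) u \<le> lambda_max (herm_part A) * (norm u)\<^sup>2"
    using self_adjoint_Max_eigenvalue[OF matrix_vector_mul_linear herm_part_self_adjoint]
    unfolding lambda_max_eq_Max by blast
  moreover have "inner (A *v v) v = lambda_max (herm_part A)"
    using Hv \<open>norm v = 1\<close> by (simp add: dot_square_norm flip: inner_herm_part_mult_vector[of A])
  ultimately show ?thesis using that[of v] by (simp add: inner_herm_part_mult_vector)
qed

lemma lambda_min_herm_part:
  fixes A :: "complex^'n^'n"
  obtains v where "norm v = 1" "inner (A *v v) v = lambda_min (herm_part A)"
    "\<And>u. lambda_min (herm_part A) * (norm u)\<^sup>2 \<le> inner (A *v u) u"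
proof -
  obtain v where "norm v = 1" and Hv: "herm_part A *v v = lambda_min (herm_part A) *\<^sub>R v"
    and "\<And>u. lambda_min (herm_part A) * (norm u)\<^sup>2 \<le> inner (herm_part A *v u) u"
    using self_adjoint_Min_eigenvalue[OF matrix_vector_mul_linear herm_part_self_adjoint]
    unfolding lambda_min_eq_Min by blast
  moreover have "inner (A *v v) v = lambda_min (herm_part A)"
    using Hv \<open>norm v = 1\<close> by (simp add: dot_square_norm flip: inner_herm_part_mult_vector[of A])
  ultimately show ?thesis using that[of v] by (simp add: inner_herm_part_mult_vector)
qed

section \<open>Resolvent norms on the real axis\<close>

lemma is_eigenvalue_iff_not_invertible:
  fixes A :: "complex^'n^'n"
  shows "is_eigenvalue A z \<longleftrightarrow> \<not> invertible (mat z - A)"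
proof -
  have "(mat z - A) *v v = 0 \<longleftrightarrow> A *v v = z *s v" for v
    by (simp add: matrix_vector_mult_diff_rdistrib mat_matrix_vector_mult eq_commute[of "z *s v"])
  then show ?thesis
    by (auto simp: is_eigenvalue_def invertible_left_inverse matrix_left_invertible_ker)
qed

lemma invertible_matrix_inv:
  assumes "invertible M"
  shows "M ** matrix_inv M = mat 1" "matrix_inv M ** M = mat 1"
  using someI_ex[OF assms[unfolded invertible_def]] by (simp_all add: matrix_inv_def)

lemma resolvent_norm_le_iff:
  fixes A :: "complex^'n^'n"
  assumes "\<delta> > 0"
  shows "resolvent_norm A z \<le> ereal (1 / \<delta>) \<longleftrightarrow> (\<forall>v. \<delta> * norm v \<le> norm (z *s v - A *v v))"
proof (cases "is_eigenvalue A z")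
  case True
  then obtain v where "v \<noteq> 0" "A *v v = z *s v" by (auto simp: is_eigenvalue_def)
  then have "\<not> \<delta> * norm v \<le> norm (z *s v - A *v v)" using \<open>\<delta> > 0\<close> by (simp add: mult_le_0_iff)
  with True show ?thesis by (auto simp: resolvent_norm_def)
next
  case False
  define M where "M = mat z - A"
  have "invertible M" using False by (simp add: M_def is_eigenvalue_iff_not_invertible)
  have "bounded_linear ((*v) (matrix_inv M))"
    by (simp add: linear_conv_bounded_linear)
  then have "spec_norm (matrix_inv M) \<le> 1 / \<delta> \<longleftrightarrow> (\<forall>v. \<delta> * norm v \<le> norm (M *v v))"
    unfolding spec_norm_def
    by (rule onorm_inverse_le_iff)
      (simp_all add: matrix_vector_mul_assoc invertible_matrix_inv[OF \<open>invertible M\<close>] \<open>\<delta> > 0\<close>)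
  with False show ?thesis
    by (simp add: resolvent_norm_def M_def matrix_vector_mult_diff_rdistrib mat_matrix_vector_mult)
qed

lemma lambda_max_herm_part_le_iff:
  fixes A :: "complex^'n^'n"
  shows "lambda_max (herm_part A) \<le> c \<longleftrightarrow>
    (\<forall>x>c. resolvent_norm A (of_real x) \<le> ereal (1 / (x - c)))"
proof -
  obtain v where "\<And>u. inner (A *v u) u \<le> lambda_max (herm_part A) * (norm u)\<^sup>2"
    "norm v = 1" "inner (A *v v) v = lambda_max (herm_part A)"
    by (metis lambda_max_herm_part)
  then have "(\<forall>x>c. \<forall>u. (x - c) * norm u \<le> norm (x *\<^sub>R u - A *v u)) \<longleftrightarrow>
      lambda_max (herm_part A) \<le> c"
    by (rule lower_bound_right_iff_quadratic_form_le)
  then show ?thesis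
    by (simp add: resolvent_norm_le_iff of_real_scalar_mult)
qed

lemma lambda_min_herm_part_ge_iff:
  fixes A :: "complex^'n^'n"
  shows "c \<le> lambda_min (herm_part A) \<longleftrightarrow>
    (\<forall>x<c. resolvent_norm A (of_real x) \<le> ereal (1 / (c - x)))"
proof -
  obtain v where "\<And>u. lambda_min (herm_part A) * (norm u)\<^sup>2 \<le> inner (A *v u) u"
    "norm v = 1" "inner (A *v v) v = lambda_min (herm_part A)"
    by (metis lambda_min_herm_part)
  then have "(\<forall>x<c. \<forall>u. (c - x) * norm u \<le> norm (x *\<^sub>R u - A *v u)) \<longleftrightarrow>
      c \<le> lambda_min (herm_part A)"
    by (rule lower_bound_left_iff_quadratic_form_ge)
  then show ?thesis
    by (simp add: resolvent_norm_le_iff of_real_scalar_mult)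
qed

theorem lemma7:
  fixes A :: "complex^'n^'n" and B :: "complex^'m^'m"
  assumes "\<forall>z. resolvent_norm A z = resolvent_norm B z"
  shows "lambda_max (herm_part A) = lambda_max (herm_part B) \<and>
         lambda_min (herm_part A) = lambda_min (herm_part B)"
proof
  have "lambda_max (herm_part A) \<le> c \<longleftrightarrow> lambda_max (herm_part B) \<le> c" for c
    using assms by (simp add: lambda_max_herm_part_le_iff)
  then show "lambda_max (herm_part A) = lambda_max (herm_part B)"
    by (metis order_antisym order_refl)
next
  have "c \<le> lambda_min (herm_part A) \<longleftrightarrow> c \<le> lambda_min (herm_part B)" for c
    using assms by (simp add: lambda_min_herm_part_ge_iff)
  then show "lambda_min (herm_part A) = lambda_min (herm_part B)"
    by (metis order_antisym order_refl)
qed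

end
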